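(* Let $P\in I(\mathcal{S})$ be defined by $P(\sigma,\pi)=\binom{\pi}{\sigma}$. For all $\sigma,\pi\in\mathcal{S}$ and every integer $d$ (for $d<0$, $P^d=(P^{-1})^{-d}$; $P^0=\delta$), $$P^d(\sigma,\pi)=d^{|\pi|-|\sigma|}P(\sigma,\pi),$$ with the convention $0^0=1$.
   Context: $\mathcal{S}=\bigcup_{n\ge0}\mathcal{S}_n$ where $\mathcal{S}_n$ is the set of permutations of $[n]$ written as words; $|\pi|$ is the length. For $\sigma\in\mathcal{S}_k$, $\pi\in\mathcal{S}_n$, $\binom{\pi}{\sigma}$ is the number of order-preserving injections $\varphi:[k]\to[n]$ such that $\pi(\varphi(1))\cdots\pi(\varphi(k))$ is order-isomorphic to $\sigma$ (i.e. $\pi(\varphi(i))<\pi(\varphi(j))\iff\sigma(i)<\sigma(j)$). $\mathcal{S}$ is ordered by $\sigma\le\pi$ iff $\binom{\pi}{\sigma}>0$. $I(\mathcal{S})$ is its incidence algebra over $\mathbb{Q}$ with convolution $(FG)(x,y)=\sum_{x\le z\le y}F(x,z)G(z,y)$ and identity $\delta(x,y)=[x=y]$. *)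

theory Defs
  imports Complex_Main
begin

definition is_perm :: "nat list \<Rightarrow> bool" where
  "is_perm xs \<longleftrightarrow> distinct xs \<and> set xs = {1..length xs}"

definition order_iso :: "nat list \<Rightarrow> nat list \<Rightarrow> bool" where
  "order_iso xs ys \<longleftrightarrow> length xs = length ys \<and>
     (\<forall>i<length xs. \<forall>j<length xs. (xs ! i < xs ! j) \<longleftrightarrow> (ys ! i < ys ! j))"

text \<open>binom w v (binom pi sigma): number of order-preserving injections [k] -> [n],
  i.e. k-element sets of positions of w (read in increasing order),
  whose subword is order-isomorphic to v.\<close>
definition pcount :: "nat list \<Rightarrow> nat list \<Rightarrow> nat" where
  "pcount w v = card {I. I \<subseteq> {0..<length w} \<and> card I = length v
                              \<and> order_iso (nths w I) v}"

definition perm_le :: "nat list \<Rightarrow> nat list \<Rightarrow> bool" where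
  "perm_le v w \<longleftrightarrow> is_perm v \<and> is_perm w \<and> pcount w v > 0"

definition incidence_elem :: "(nat list \<Rightarrow> nat list \<Rightarrow> rat) \<Rightarrow> bool" where
  "incidence_elem F \<longleftrightarrow> (\<forall>x y. \<not> perm_le x y \<longrightarrow> F x y = 0)"

definition conv :: "(nat list \<Rightarrow> nat list \<Rightarrow> rat) \<Rightarrow> (nat list \<Rightarrow> nat list \<Rightarrow> rat)
                     \<Rightarrow> nat list \<Rightarrow> nat list \<Rightarrow> rat" where
  "conv F G x y = (\<Sum>z\<in>{z. perm_le x z \<and> perm_le z y}. F x z * G z y)"

definition delta :: "nat list \<Rightarrow> nat list \<Rightarrow> rat" where
  "delta x y = (if is_perm x \<and> x = y then 1 else 0)"

fun conv_pow :: "(nat list \<Rightarrow> nat list \<Rightarrow> rat) \<Rightarrow> nat \<Rightarrow> nat list \<Rightarrow> nat list \<Rightarrow> rat" where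
  "conv_pow F 0 = delta"
| "conv_pow F (Suc n) = conv F (conv_pow F n)"

definition conv_inv :: "(nat list \<Rightarrow> nat list \<Rightarrow> rat) \<Rightarrow> nat list \<Rightarrow> nat list \<Rightarrow> rat" where
  "conv_inv F = (THE G. incidence_elem G \<and> conv F G = delta \<and> conv G F = delta)"

definition conv_ipow :: "(nat list \<Rightarrow> nat list \<Rightarrow> rat) \<Rightarrow> int \<Rightarrow> nat list \<Rightarrow> nat list \<Rightarrow> rat" where
  "conv_ipow F d = (if 0 \<le> d then conv_pow F (nat d) else conv_pow (conv_inv F) (nat (- d)))"

definition Pmat :: "nat list \<Rightarrow> nat list \<Rightarrow> rat" where
  "Pmat v w = (if is_perm v \<and> is_perm w then of_nat (pcount w v) else 0)"

end

theory Submission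
  imports Defs
begin

text \<open>Put \<open>Q\<^sub>a(\<sigma>, \<pi>) = a\<^bsup>|\<pi>|-|\<sigma>|\<^esup> P(\<sigma>, \<pi>)\<close>, so that \<open>Q\<^sub>0 = \<delta>\<close> and \<open>Q\<^sub>1 = P\<close>.
  Then \<open>Q\<^sub>a Q\<^sub>b = Q\<^bsub>a+b\<^esub>\<close>: a pattern \<open>z\<close> together with an occurrence of \<open>z\<close> in \<open>\<pi>\<close> is just
  a set \<open>J\<close> of positions of \<open>\<pi>\<close>, and an occurrence of \<open>\<sigma>\<close> in \<open>z\<close> is then an occurrence
  \<open>I \<subseteq> J\<close> of \<open>\<sigma>\<close> in \<open>\<pi>\<close>; for fixed \<open>I\<close>, the sum of \<open>a\<^bsup>|J|-|I|\<^esup> b\<^bsup>|\<pi>|-|J|\<^esup>\<close> over all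
  \<open>J \<supseteq> I\<close> is \<open>(a+b)\<^bsup>|\<pi>|-|I|\<^esup>\<close>. Hence \<open>P\<^sup>n = Q\<^sub>n\<close>, and \<open>Q\<^bsub>-1\<^esub>\<close> is the inverse of \<open>P\<close>,
  which is unique since \<open>P\<close> is unitriangular; so \<open>P\<^bsup>-n\<^esup> = Q\<^bsub>-n\<^esub>\<close>.\<close>

lemma order_iso_refl: "order_iso xs xs"
  by (simp add: order_iso_def)

lemma order_iso_sym: "order_iso xs ys \<Longrightarrow> order_iso ys xs"
  by (simp add: order_iso_def)

lemma order_iso_trans: "order_iso xs ys \<Longrightarrow> order_iso ys zs \<Longrightarrow> order_iso xs zs"
  by (simp add: order_iso_def)

lemma order_iso_iff_zip:
  assumes "length xs = length ys"
  shows "order_iso xs ys \<longleftrightarrow>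
    (\<forall>(a, b) \<in> set (zip xs ys). \<forall>(c, d) \<in> set (zip xs ys). a < c \<longleftrightarrow> b < d)"
  using assms by (auto simp: order_iso_def set_zip; metis)

lemma zip_nths: "length xs = length ys \<Longrightarrow> zip (nths xs I) (nths ys I) = nths (zip xs ys) I"
proof (induction xs arbitrary: ys I)
  case (Cons x xs)
  then show ?case by (cases ys) (auto simp: nths_Cons)
qed simp

lemma order_iso_nths:
  assumes "order_iso xs ys"
  shows "order_iso (nths xs I) (nths ys I)"
proof -
  have len: "length xs = length ys"
    using assms by (simp add: order_iso_def)
  then have len_nths: "length (nths xs I) = length (nths ys I)"
    by (simp add: length_nths)
  have "set (zip (nths xs I) (nths ys I)) \<subseteq> set (zip xs ys)"
    using zip_nths[OF len] set_nths_subset by metis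
  with assms show ?thesis
    using order_iso_iff_zip[OF len] order_iso_iff_zip[OF len_nths] by blast
qed

lemma distinct_if_order_iso:
  assumes "order_iso xs ys" and "distinct xs"
  shows "distinct ys"
  unfolding distinct_conv_nth
proof (intro allI impI)
  fix i j assume "i < length ys" "j < length ys" "i \<noteq> j"
  with assms have "xs ! i \<noteq> xs ! j"
    by (simp add: order_iso_def nth_eq_iff_index_eq)
  then have "xs ! i < xs ! j \<or> xs ! j < xs ! i"
    by linarith
  with assms \<open>i < length ys\<close> \<open>j < length ys\<close> show "ys ! i \<noteq> ys ! j"
    by (auto simp: order_iso_def)
qed

definition rank_in :: "'a::linorder set \<Rightarrow> 'a \<Rightarrow> nat" where
  "rank_in A x = card {y \<in> A. y < x}"

lemma rank_in_strict_mono: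
  assumes "finite A" and "x \<in> A" and "x < y"
  shows "rank_in A x < rank_in A y"
  unfolding rank_in_def
proof (rule psubset_card_mono)
  show "{z \<in> A. z < x} \<subset> {z \<in> A. z < y}"
    using assms by auto
qed (use assms in auto)

lemma rank_in_less_iff:
  assumes "finite A" and "x \<in> A" and "y \<in> A"
  shows "rank_in A x < rank_in A y \<longleftrightarrow> x < y"
  using rank_in_strict_mono[OF assms(1,2)] rank_in_strict_mono[OF assms(1,3)]
  by (metis linorder_neqE order.asym)

lemma inj_on_rank_in: "finite A \<Longrightarrow> inj_on (rank_in A) A"
  by (rule inj_onI) (metis rank_in_less_iff linorder_neqE order.irrefl)

lemma rank_in_image:
  assumes "finite A"
  shows "rank_in A ` A = {0..<card A}"
proof (rule card_subset_eq)
  show "rank_in A ` A \<subseteq> {0..<card A}"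
    using assms by (auto simp: rank_in_def intro!: psubset_card_mono)
  show "card (rank_in A ` A) = card {0..<card A}"
    using card_image[OF inj_on_rank_in[OF assms]] by simp
qed simp

lemma nths_nths_rank_in:
  assumes "finite J" and "I \<subseteq> J"
  shows "nths (nths w J) (rank_in J ` I) = nths w I"
proof -
  have "{i \<in> J. \<exists>j \<in> rank_in J ` I. card {i' \<in> J. i' < i} = j} = I"
    using inj_on_rank_in[OF assms(1)] assms(2) unfolding rank_in_def inj_on_def by blast
  then show ?thesis
    by (simp add: nths_nths)
qed

lemma rank_in_set_nth:
  assumes "distinct xs" and "i < length xs"
  shows "rank_in (set xs) (xs ! i) = card {j. j < length xs \<and> xs ! j < xs ! i}"
proof -
  have "{y \<in> set xs. y < xs ! i} = (!) xs ` {j. j < length xs \<and> xs ! j < xs ! i}"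
    by (auto simp: in_set_conv_nth)
  moreover have "inj_on ((!) xs) {j. j < length xs \<and> xs ! j < xs ! i}"
    using assms(1) by (auto simp: inj_on_def nth_eq_iff_index_eq)
  ultimately show ?thesis
    by (simp add: rank_in_def card_image)
qed

definition standardize :: "nat list \<Rightarrow> nat list" where
  "standardize xs = map (\<lambda>x. Suc (rank_in (set xs) x)) xs"

lemma length_standardize [simp]: "length (standardize xs) = length xs"
  by (simp add: standardize_def)

lemma order_iso_standardize: "order_iso xs (standardize xs)"
  by (simp add: order_iso_def standardize_def rank_in_less_iff)

lemma is_perm_standardize:
  assumes "distinct xs"
  shows "is_perm (standardize xs)"
proof -
  have "inj_on (\<lambda>x. Suc (rank_in (set xs) x)) (set xs)"
    using inj_on_rank_in[of "set xs"] by (simp add: inj_on_def)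
  moreover have "Suc ` rank_in (set xs) ` set xs = Suc ` {0..<length xs}"
    using rank_in_image[of "set xs"] distinct_card[OF assms] by simp
  moreover have "Suc ` {0..<length xs} = {1..length xs}"
    by (simp add: image_Suc_atLeastLessThan atLeastLessThanSuc_atLeastAtMost)
  ultimately show ?thesis
    using assms by (simp add: is_perm_def standardize_def distinct_map image_image)
qed

lemma standardize_perm:
  assumes "is_perm p"
  shows "standardize p = p"
proof -
  have "rank_in {1..length p} x = x - 1" if "x \<in> {1..length p}" for x
  proof -
    have "{y \<in> {1..length p}. y < x} = {1..<x}"
      using that by auto
    then show ?thesis
      by (simp add: rank_in_def)
  qed
  then show ?thesis
    using assms by (auto simp: standardize_def is_perm_def intro: map_idI)
qed

lemma standardize_eq_if_order_iso:
  assumes "order_iso xs ys" and "distinct xs"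
  shows "standardize ys = standardize xs"
proof (rule nth_equalityI)
  have len: "length xs = length ys" and ys: "distinct ys"
    using assms distinct_if_order_iso by (auto simp: order_iso_def)
  then show "length (standardize ys) = length (standardize xs)"
    by simp
  fix i assume "i < length (standardize ys)"
  then have i: "i < length xs"
    using len by simp
  have "{j. j < length ys \<and> ys ! j < ys ! i} = {j. j < length xs \<and> xs ! j < xs ! i}"
    using assms(1) i len by (auto simp: order_iso_def)
  then show "standardize ys ! i = standardize xs ! i"
    using rank_in_set_nth[OF ys] rank_in_set_nth[OF assms(2)] i len
    by (simp add: standardize_def)
qed

lemma perm_eq_standardize_if_order_iso:
  assumes "distinct xs" and "is_perm z" and "order_iso xs z"
  shows "z = standardize xs"
  using standardize_eq_if_order_iso[OF assms(3,1)] standardize_perm[OF assms(2)] by simp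

definition occurrences :: "nat list \<Rightarrow> nat list \<Rightarrow> nat set set" where
  "occurrences w v =
     {I. I \<subseteq> {0..<length w} \<and> card I = length v \<and> order_iso (nths w I) v}"

lemma pcount_eq_card_occurrences: "pcount w v = card (occurrences w v)"
  by (simp add: pcount_def occurrences_def)

lemma finite_occurrences: "finite (occurrences w v)"
  by (rule finite_subset[of _ "Pow {0..<length w}"]) (auto simp: occurrences_def)

lemma length_nths_subset: "I \<subseteq> {0..<length w} \<Longrightarrow> length (nths w I) = card I"
proof -
  assume "I \<subseteq> {0..<length w}"
  then have "{i. i < length w \<and> i \<in> I} = I"
    by auto
  then show ?thesis
    by (simp add: length_nths)
qed

lemma card_le_length_if_subset: "I \<subseteq> {0..<length w} \<Longrightarrow> card I \<le> length w"
  using card_mono[of "{0..<length w}" I] by simp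

lemma occurrences_of_length:
  assumes "I \<in> occurrences w v" and "length v = length w"
  shows "I = {0..<length w}"
  using assms card_subset_eq[of "{0..<length w}" I] by (simp add: occurrences_def)

lemma pcount_self: "pcount x x = 1"
proof -
  have "occurrences x x = {{0..<length x}}"
  proof
    show "occurrences x x \<subseteq> {{0..<length x}}"
      using occurrences_of_length[of _ x x] by blast
    show "{{0..<length x}} \<subseteq> occurrences x x"
      by (simp add: occurrences_def nths_all order_iso_refl)
  qed
  then show ?thesis
    by (simp add: pcount_eq_card_occurrences)
qed

lemma obtain_occurrence:
  assumes "0 < pcount w v"
  obtains I where "I \<in> occurrences w v"
  using assms by (auto simp: pcount_eq_card_occurrences card_gt_0_iff)

lemma length_le_if_pcount_pos: "0 < pcount w v \<Longrightarrow> length v \<le> length w"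
  by (elim obtain_occurrence) (auto simp: occurrences_def dest: card_le_length_if_subset)

lemma eq_if_pcount_pos_length_eq:
  assumes "is_perm v" and "is_perm w" and "0 < pcount w v" and "length v = length w"
  shows "v = w"
proof -
  obtain I where I: "I \<in> occurrences w v"
    using assms(3) by (rule obtain_occurrence)
  then have "order_iso w v"
    using occurrences_of_length[OF I assms(4)] by (simp add: occurrences_def nths_all)
  moreover have "distinct w"
    using assms(2) by (simp add: is_perm_def)
  ultimately show ?thesis
    using perm_eq_standardize_if_order_iso assms(1) standardize_perm[OF assms(2)] by simp
qed

lemma length_le_if_perm_le: "perm_le x y \<Longrightarrow> length x \<le> length y"
  by (simp add: perm_le_def length_le_if_pcount_pos)

lemma length_less_if_perm_le:
  assumes "perm_le x y" and "x \<noteq> y"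
  shows "length x < length y"
proof -
  have "length x \<noteq> length y"
    using assms eq_if_pcount_pos_length_eq by (auto simp: perm_le_def)
  with length_le_if_perm_le[OF assms(1)] show ?thesis
    by simp
qed

lemma pcount_order_iso:
  assumes "order_iso u u'"
  shows "pcount u v = pcount u' v"
proof -
  have "order_iso (nths u I) v \<longleftrightarrow> order_iso (nths u' I) v" for I
    using order_iso_nths[OF assms] order_iso_nths[OF order_iso_sym[OF assms]] order_iso_trans
    by blast
  moreover have "length u = length u'"
    using assms by (simp add: order_iso_def)
  ultimately show ?thesis
    by (simp add: pcount_def)
qed

lemma occurrences_nths:
  assumes J: "J \<subseteq> {0..<length w}"
  shows "occurrences (nths w J) v = image (rank_in J) ` {I \<in> occurrences w v. I \<subseteq> J}"
proof
  have fin: "finite J"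
    using J finite_subset by blast
  have card_image_rank: "card (rank_in J ` I) = card I" if "I \<subseteq> J" for I
    using that by (intro card_image inj_on_subset[OF inj_on_rank_in[OF fin]])
  show "image (rank_in J) ` {I \<in> occurrences w v. I \<subseteq> J} \<subseteq> occurrences (nths w J) v"
  proof
    fix I' assume "I' \<in> image (rank_in J) ` {I \<in> occurrences w v. I \<subseteq> J}"
    then obtain I where I: "I \<in> occurrences w v" "I \<subseteq> J" and I': "I' = rank_in J ` I"
      by blast
    have "I' \<subseteq> {0..<length (nths w J)}"
      using I(2) rank_in_image[OF fin] length_nths_subset[OF J] I' by auto
    with I show "I' \<in> occurrences (nths w J) v"
      using nths_nths_rank_in[OF fin I(2), of w] card_image_rank[OF I(2)] I'
      by (simp add: occurrences_def)
  qed
  show "occurrences (nths w J) v \<subseteq> image (rank_in J) ` {I \<in> occurrences w v. I \<subseteq> J}"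
  proof
    fix I' assume I': "I' \<in> occurrences (nths w J) v"
    define I where "I = {i \<in> J. rank_in J i \<in> I'}"
    have "I' \<subseteq> rank_in J ` J"
      using I' rank_in_image[OF fin] length_nths_subset[OF J] by (auto simp: occurrences_def)
    then have image_I: "rank_in J ` I = I'"
      unfolding I_def by auto
    have IJ: "I \<subseteq> J"
      by (auto simp: I_def)
    have "I \<in> occurrences w v"
      using I' IJ J nths_nths_rank_in[OF fin IJ, of w] card_image_rank[OF IJ]
      by (auto simp: occurrences_def image_I)
    with IJ image_I show "I' \<in> image (rank_in J) ` {I \<in> occurrences w v. I \<subseteq> J}"
      by blast
  qed
qed

lemma pcount_nths:
  assumes J: "J \<subseteq> {0..<length w}"
  shows "pcount (nths w J) v = card {I \<in> occurrences w v. I \<subseteq> J}"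
proof -
  have "inj_on (image (rank_in J)) {I \<in> occurrences w v. I \<subseteq> J}"
    using J finite_subset
    by (intro inj_on_subset[OF inj_on_image_Pow[OF inj_on_rank_in]]) auto
  then show ?thesis
    by (simp add: pcount_eq_card_occurrences occurrences_nths[OF J] card_image)
qed

lemma finite_perms_length_le: "finite {z. is_perm z \<and> length z \<le> n}"
  by (rule finite_subset[OF _ finite_lists_length_le[OF finite_atLeastAtMost[of 1 n], of n]])
     (auto simp: is_perm_def)

text \<open>Both sides count pairs of a pattern \<open>z\<close> and an occurrence of it in \<open>w\<close>; such a pair
  is determined by the set of positions, since the pattern is its standardization.\<close>

lemma sum_mult_pcount_eq_sum_Pow:
  fixes f :: "nat list \<Rightarrow> 'a::comm_semiring_1"
  assumes "distinct w"
  shows "(\<Sum>z | is_perm z \<and> length z \<le> length w. f z * of_nat (pcount w z))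
           = (\<Sum>J\<in>Pow {0..<length w}. f (standardize (nths w J)))"
proof -
  let ?T = "{z. is_perm z \<and> length z \<le> length w}"
  have "(\<Sum>z\<in>?T. f z * of_nat (pcount w z)) = (\<Sum>z\<in>?T. \<Sum>J\<in>occurrences w z. f z)"
    by (simp add: pcount_eq_card_occurrences mult.commute)
  also have "\<dots> = (\<Sum>(z, J)\<in>Sigma ?T (occurrences w). f z)"
    by (rule sum.Sigma) (simp_all add: finite_perms_length_le finite_occurrences)
  also have "\<dots> = (\<Sum>J\<in>Pow {0..<length w}. f (standardize (nths w J)))"
  proof (rule sum.reindex_bij_witness[where i = "\<lambda>J. (standardize (nths w J), J)" and j = snd])
    fix p assume "p \<in> Sigma ?T (occurrences w)"
    then show "(standardize (nths w (snd p)), snd p) = p"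
      using perm_eq_standardize_if_order_iso[OF distinct_nthsI[OF assms]]
      by (auto simp: occurrences_def)
  next
    fix J assume J: "J \<in> Pow {0..<length w}"
    then show "(standardize (nths w J), J) \<in> Sigma ?T (occurrences w)"
      using is_perm_standardize[OF distinct_nthsI[OF assms]] order_iso_standardize
        length_nths_subset[of J w] card_le_length_if_subset[of J w]
      by (auto simp: occurrences_def)
  qed (use perm_eq_standardize_if_order_iso[OF distinct_nthsI[OF assms]]
       in \<open>force simp: occurrences_def\<close>)+
  finally show ?thesis .
qed

lemma sum_supersets_binomial:
  fixes a b :: "'a::comm_semiring_1"
  assumes "finite N" and "I \<subseteq> N"
  shows "(\<Sum>J | I \<subseteq> J \<and> J \<subseteq> N. a ^ (card J - card I) * b ^ (card N - card J))
           = (a + b) ^ (card N - card I)"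
proof -
  have fin: "finite K" if "K \<subseteq> N - I" for K
    using that assms(1) finite_subset by blast
  have card_union: "card (I \<union> K) = card I + card K" if "K \<subseteq> N - I" for K
    using that fin[OF that] finite_subset[OF assms(2,1)] by (subst card_Un_disjoint) auto
  have card_diff: "card (N - I) = card N - card I"
    using card_Diff_subset[OF finite_subset[OF assms(2,1)] assms(2)] .
  have "(\<Sum>K\<in>Pow (N - I). a ^ card K * b ^ (card (N - I) - card K))
      = (\<Sum>J | I \<subseteq> J \<and> J \<subseteq> N. a ^ (card J - card I) * b ^ (card N - card J))"
  proof (rule sum.reindex_bij_witness[where i = "\<lambda>J. J - I" and j = "\<lambda>K. I \<union> K"])
    fix K assume "K \<in> Pow (N - I)"
    then show "a ^ (card (I \<union> K) - card I) * b ^ (card N - card (I \<union> K))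
               = a ^ card K * b ^ (card (N - I) - card K)"
      using card_union card_diff by (simp add: diff_diff_add)
  qed (use assms in auto)
  then have "(\<Sum>J | I \<subseteq> J \<and> J \<subseteq> N. a ^ (card J - card I) * b ^ (card N - card J))
      = (\<Sum>K\<in>Pow (N - I). a ^ card K * b ^ (card (N - I) - card K))"
    by simp
  also have "\<dots> = (\<Sum>K\<in>Pow (N - I). (\<Prod>_\<in>K. a) * (\<Prod>_\<in>N - I - K. b))"
    using fin by (intro sum.cong refl) (auto simp: card_Diff_subset)
  also have "\<dots> = (\<Prod>_\<in>N - I. a + b)"
    by (rule prod_add[symmetric]) (use assms(1) in simp)
  also have "\<dots> = (a + b) ^ (card N - card I)"
    by (simp add: card_diff)
  finally show ?thesis .
qed

text \<open>After passing to position sets \<open>J\<close>, exchange the sums over \<open>J\<close> and over the occurrences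
  \<open>I \<subseteq> J\<close> of \<open>v\<close>; the inner sum over \<open>J \<supseteq> I\<close> is a binomial expansion.\<close>

lemma sum_pcount_mult_pcount:
  fixes a b :: "'a::comm_semiring_1"
  assumes "distinct w"
  shows "(\<Sum>z | is_perm z \<and> length z \<le> length w.
            a ^ (length z - length v) * b ^ (length w - length z) * of_nat (pcount z v)
              * of_nat (pcount w z))
         = (a + b) ^ (length w - length v) * of_nat (pcount w v)"
proof -
  let ?N = "{0..<length w}" and ?occ = "occurrences w v"
  let ?g = "\<lambda>J. a ^ (card J - length v) * b ^ (length w - card J)"
  have "(\<Sum>z | is_perm z \<and> length z \<le> length w.
            a ^ (length z - length v) * b ^ (length w - length z) * of_nat (pcount z v)
              * of_nat (pcount w z))
      = (\<Sum>J\<in>Pow ?N. ?g J * of_nat (pcount (standardize (nths w J)) v))"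
    by (simp add: sum_mult_pcount_eq_sum_Pow[OF assms] length_nths_subset)
  also have "\<dots> = (\<Sum>J\<in>Pow ?N. \<Sum>I | I \<in> ?occ \<and> I \<subseteq> J. ?g J)"
    using pcount_order_iso[OF order_iso_sym[OF order_iso_standardize]] pcount_nths
    by (intro sum.cong refl) (simp add: mult.commute)
  also have "\<dots> = (\<Sum>I\<in>?occ. \<Sum>J | J \<in> Pow ?N \<and> I \<subseteq> J. ?g J)"
    by (rule sum.swap_restrict) (simp_all add: finite_occurrences)
  also have "\<dots> = (\<Sum>I\<in>?occ. (a + b) ^ (length w - length v))"
  proof (rule sum.cong)
    fix I assume "I \<in> ?occ"
    then have "I \<subseteq> ?N" and "card I = length v"
      by (auto simp: occurrences_def)
    then show "(\<Sum>J | J \<in> Pow ?N \<and> I \<subseteq> J. ?g J) = (a + b) ^ (length w - length v)"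
      using sum_supersets_binomial[of ?N I a b] by (simp add: conj_commute)
  qed simp
  also have "\<dots> = (a + b) ^ (length w - length v) * of_nat (pcount w v)"
    by (simp add: pcount_eq_card_occurrences mult.commute)
  finally show ?thesis .
qed

definition scaled_Pmat :: "rat \<Rightarrow> nat list \<Rightarrow> nat list \<Rightarrow> rat" where
  "scaled_Pmat a v w = a ^ (length w - length v) * Pmat v w"

lemma Pmat_eq_0_if_not_perm_le: "\<not> perm_le v w \<Longrightarrow> Pmat v w = 0"
  by (auto simp: Pmat_def perm_le_def)

lemma incidence_elem_scaled_Pmat: "incidence_elem (scaled_Pmat a)"
  by (simp add: incidence_elem_def scaled_Pmat_def Pmat_eq_0_if_not_perm_le)

lemma scaled_Pmat_1: "scaled_Pmat 1 = Pmat"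
  by (simp add: scaled_Pmat_def fun_eq_iff)

lemma scaled_Pmat_0: "scaled_Pmat 0 = delta"
proof (intro ext)
  fix v w
  show "scaled_Pmat 0 v w = delta v w"
  proof (cases "perm_le v w")
    case False
    then show ?thesis
      by (auto simp: scaled_Pmat_def Pmat_eq_0_if_not_perm_le delta_def perm_le_def pcount_self)
  next
    case True
    then show ?thesis
      using length_less_if_perm_le[OF True]
      by (cases "v = w") (auto simp: scaled_Pmat_def Pmat_def delta_def perm_le_def pcount_self)
  qed
qed

lemma finite_perm_interval: "finite {z. perm_le x z \<and> perm_le z y}"
  by (rule finite_subset[OF _ finite_perms_length_le[of "length y"]])
     (auto simp: perm_le_def dest: length_le_if_pcount_pos)

lemma conv_scaled_Pmat: "conv (scaled_Pmat a) (scaled_Pmat b) = scaled_Pmat (a + b)"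
proof (intro ext)
  fix v w
  show "conv (scaled_Pmat a) (scaled_Pmat b) v w = scaled_Pmat (a + b) v w"
  proof (cases "is_perm v \<and> is_perm w")
    case False
    then have "{z. perm_le v z \<and> perm_le z w} = {}"
      by (auto simp: perm_le_def)
    with False show ?thesis
      by (auto simp: conv_def scaled_Pmat_def Pmat_def)
  next
    case True
    let ?T = "{z. is_perm z \<and> length z \<le> length w}"
    have "conv (scaled_Pmat a) (scaled_Pmat b) v w
        = (\<Sum>z\<in>?T. scaled_Pmat a v z * scaled_Pmat b z w)"
      unfolding conv_def
    proof (rule sum.mono_neutral_left[OF finite_perms_length_le])
      show "{z. perm_le v z \<and> perm_le z w} \<subseteq> ?T"
        by (auto simp: perm_le_def dest: length_le_if_pcount_pos)
    qed (auto simp: scaled_Pmat_def Pmat_eq_0_if_not_perm_le)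
    also have "\<dots> = (\<Sum>z\<in>?T. a ^ (length z - length v) * b ^ (length w - length z)
                      * of_nat (pcount z v) * of_nat (pcount w z))"
      using True by (intro sum.cong refl) (auto simp: scaled_Pmat_def Pmat_def)
    also have "\<dots> = scaled_Pmat (a + b) v w"
      using True sum_pcount_mult_pcount[where a = a and b = b and v = v and w = w]
      by (simp add: scaled_Pmat_def Pmat_def is_perm_def)
    finally show ?thesis .
  qed
qed

lemma conv_pow_scaled_Pmat: "conv_pow (scaled_Pmat a) n = scaled_Pmat (of_nat n * a)"
  by (induction n) (simp_all add: scaled_Pmat_0 conv_scaled_Pmat algebra_simps)

text \<open>An element that is \<open>1\<close> on the diagonal is cancellable on the left: comparing
  \<open>(F * G) x y\<close> with \<open>(F * G') x y\<close> determines \<open>G x y\<close> from the values \<open>G z y\<close> with \<open>x < z\<close>,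
  so induction on \<open>|y| - |x|\<close> applies.\<close>

lemma conv_left_cancel:
  assumes F: "\<And>x. is_perm x \<Longrightarrow> F x x = 1"
    and G: "incidence_elem G" and G': "incidence_elem G'"
    and eq: "conv F G = conv F G'"
  shows "G = G'"
proof (intro ext)
  fix x y
  show "G x y = G' x y"
  proof (induction "length y - length x" arbitrary: x rule: less_induct)
    case less
    show ?case
    proof (cases "perm_le x y")
      case False
      with G G' show ?thesis
        by (simp add: incidence_elem_def)
    next
      case True
      let ?S = "{z. perm_le x z \<and> perm_le z y}"
      have x: "x \<in> ?S" and Fx: "F x x = 1"
        using True F by (auto simp: perm_le_def pcount_self)
      have above: "G z y = G' z y" if "z \<in> ?S - {x}" for z
        using that length_less_if_perm_le[of x z] length_le_if_perm_le[of z y]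
        by (intro less) auto
      have split: "conv F H x y = H x y + (\<Sum>z\<in>?S - {x}. F x z * H z y)" for H
        unfolding conv_def sum.remove[OF finite_perm_interval x] Fx by simp
      have "(\<Sum>z\<in>?S - {x}. F x z * G z y) = (\<Sum>z\<in>?S - {x}. F x z * G' z y)"
        using above by simp
      with split[of G] split[of G'] eq show ?thesis
        by simp
    qed
  qed
qed

lemma conv_inv_Pmat: "conv_inv Pmat = scaled_Pmat (-1)"
  unfolding conv_inv_def
proof (rule the_equality)
  have inverse: "conv Pmat (scaled_Pmat (-1)) = delta" "conv (scaled_Pmat (-1)) Pmat = delta"
    by (simp_all add: scaled_Pmat_1[symmetric] conv_scaled_Pmat scaled_Pmat_0)
  then show "incidence_elem (scaled_Pmat (-1)) \<and> conv Pmat (scaled_Pmat (-1)) = delta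
               \<and> conv (scaled_Pmat (-1)) Pmat = delta"
    by (simp add: incidence_elem_scaled_Pmat)
  fix G
  assume G: "incidence_elem G \<and> conv Pmat G = delta \<and> conv G Pmat = delta"
  have "Pmat x x = 1" if "is_perm x" for x
    using that by (simp add: Pmat_def pcount_self)
  then show "G = scaled_Pmat (-1)"
    by (rule conv_left_cancel[where F = Pmat]) (use G inverse incidence_elem_scaled_Pmat in simp_all)
qed

theorem mainTheorem6:
  fixes v w :: "nat list" and d :: int
  assumes "is_perm v" and "is_perm w"
  shows "conv_ipow Pmat d v w
           = (of_int d) ^ (length w - length v) * Pmat v w"
proof -
  have "conv_ipow Pmat d = scaled_Pmat (of_int d)"
  proof (cases "0 \<le> d")
    case True
    then show ?thesis
      using conv_pow_scaled_Pmat[of 1 "nat d"] by (simp add: conv_ipow_def scaled_Pmat_1)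
  next
    case False
    then show ?thesis
      using conv_pow_scaled_Pmat[of "-1" "nat (- d)"] by (simp add: conv_ipow_def conv_inv_Pmat)
  qed
  then show ?thesis
    by (simp add: scaled_Pmat_def)
qed

end
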